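(* Let $f:\mathbb R^n\to\mathbb R$ be a convex polynomial of degree $d$ such that $f(\mathbf x)=s(\mathbf x)+p(\mathbf x)$ for all $\mathbf x\in\mathbb R^n$, where $s$ is a separable polynomial (i.e., $s(\mathbf x)=\sum_{j=1}^n s_j(x_j)$ for univariate polynomials $s_j$) and $p$ is a polynomial consisting only of non-separable monomials (monomials involving at least two distinct variables). Then $\deg(s)\ge\deg(p)$. *)

theory Defs
  imports "HOL-Analysis.Analysis" "HOL-Computational_Algebra.Polynomial"
begin

text \<open>Multivariate real polynomials on real^'n are represented by their coefficient
  function on exponent vectors (alpha :: 'n => nat), with finite support.\<close>

definition mono_eval :: "('n::finite \<Rightarrow> nat) \<Rightarrow> real^'n \<Rightarrow> real" where
  "mono_eval \<alpha> x = (\<Prod>i\<in>UNIV. (x$i) ^ (\<alpha> i))"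

definition mpoly_eval :: "(('n::finite \<Rightarrow> nat) \<Rightarrow> real) \<Rightarrow> real^'n \<Rightarrow> real" where
  "mpoly_eval c x = (\<Sum>\<alpha>\<in>{\<alpha>. c \<alpha> \<noteq> 0}. c \<alpha> * mono_eval \<alpha> x)"

text \<open>Total degree; the zero polynomial gets degree 0 by convention.\<close>
definition total_degree :: "(('n::finite \<Rightarrow> nat) \<Rightarrow> real) \<Rightarrow> nat" where
  "total_degree c = Max (insert 0 {sum \<alpha> UNIV | \<alpha>. c \<alpha> \<noteq> 0})"

definition non_separable_mono :: "('n::finite \<Rightarrow> nat) \<Rightarrow> bool" where
  "non_separable_mono \<alpha> \<longleftrightarrow> card {i. \<alpha> i \<noteq> 0} \<ge> 2"

definition separable_eval :: "('n::finite \<Rightarrow> real poly) \<Rightarrow> real^'n \<Rightarrow> real" where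
  "separable_eval s x = (\<Sum>j\<in>UNIV. poly (s j) (x$j))"

definition separable_degree :: "('n::finite \<Rightarrow> real poly) \<Rightarrow> nat" where
  "separable_degree s = Max (range (\<lambda>j. degree (s j)))"

end

theory Submission
  imports Defs
begin

text \<open>
  Suppose the total degree \<open>D\<close> of \<open>p\<close> exceeds the degrees of all \<open>s\<^sub>j\<close>. Then
  \<open>f (t x) / t ^ D\<close> tends, as \<open>t \<rightarrow> \<infinity>\<close>, to \<open>q x\<close>, where \<open>q\<close> is the homogeneous part of
  degree \<open>D\<close> of \<open>p\<close>. As a pointwise limit of convex functions, \<open>q\<close> is convex. Being a sum
  of non-separable monomials, \<open>q\<close> vanishes on the coordinate axes; writing \<open>x\<close> as the
  average of the points \<open>n x\<^sub>i e\<^sub>i\<close>, Jensen's inequality gives \<open>q x \<le> 0\<close>, and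
  \<open>0 = q 0 \<le> (q x + q (-x)) / 2\<close> then forces \<open>q = 0\<close>. A polynomial function that vanishes
  identically has only zero coefficients, contradicting that \<open>p\<close> has a monomial of degree \<open>D\<close>.
\<close>

lemma convex_on_compose_scaleR:
  fixes f :: "'a::real_vector \<Rightarrow> real"
  assumes "convex_on UNIV f"
  shows "convex_on UNIV (\<lambda>x. f (c *\<^sub>R x))"
proof
  fix x y :: 'a and t :: real
  assume "0 < t" "t < 1"
  then show "f (c *\<^sub>R ((1 - t) *\<^sub>R x + t *\<^sub>R y)) \<le> (1 - t) * f (c *\<^sub>R x) + t * f (c *\<^sub>R y)"
    using convex_onD[OF assms, of t "c *\<^sub>R x" "c *\<^sub>R y"] by (simp add: scaleR_add_right mult.commute)
qed simp

lemma convex_on_tendsto: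
  fixes h :: "'b \<Rightarrow> 'a::real_vector \<Rightarrow> real"
  assumes "F \<noteq> bot" and "convex S" and "eventually (\<lambda>n. convex_on S (h n)) F"
    and "\<And>x. x \<in> S \<Longrightarrow> ((\<lambda>n. h n x) \<longlongrightarrow> g x) F"
  shows "convex_on S g"
proof (rule convex_onI[OF _ assms(2)])
  fix t :: real and x y
  assume t: "0 < t" "t < 1" and xy: "x \<in> S" "y \<in> S"
  then have "(1 - t) *\<^sub>R x + t *\<^sub>R y \<in> S"
    using assms(2) by (simp add: convexD)
  then have lhs: "((\<lambda>n. h n ((1 - t) *\<^sub>R x + t *\<^sub>R y)) \<longlongrightarrow> g ((1 - t) *\<^sub>R x + t *\<^sub>R y)) F"
    by (rule assms(4))
  have rhs: "((\<lambda>n. (1 - t) * h n x + t * h n y) \<longlongrightarrow> (1 - t) * g x + t * g y) F"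
    using xy by (intro tendsto_add tendsto_mult_left assms(4))
  have "eventually (\<lambda>n. h n ((1 - t) *\<^sub>R x + t *\<^sub>R y) \<le> (1 - t) * h n x + t * h n y) F"
    using assms(3) by eventually_elim (use t xy in \<open>simp add: convex_onD\<close>)
  then show "g ((1 - t) *\<^sub>R x + t *\<^sub>R y) \<le> (1 - t) * g x + t * g y"
    by (rule tendsto_le[OF assms(1) rhs lhs])
qed

lemma convex_on_nonpos_if_zero_on_axes:
  fixes g :: "'a::euclidean_space \<Rightarrow> real"
  assumes "convex_on UNIV g" and "\<And>b a. b \<in> Basis \<Longrightarrow> g (a *\<^sub>R b) = 0"
  shows "g x \<le> 0"
proof -
  define N where "N = real DIM('a)"
  have "g x = g (\<Sum>b\<in>Basis. (1 / N) *\<^sub>R ((N * (x \<bullet> b)) *\<^sub>R b))"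
    by (simp add: N_def euclidean_representation)
  also have "\<dots> \<le> (\<Sum>b\<in>Basis. (1 / N) * g ((N * (x \<bullet> b)) *\<^sub>R b))"
    using assms(1) by (intro convex_on_sum) (auto simp: N_def)
  also have "\<dots> = 0"
    using assms(2) by simp
  finally show ?thesis .
qed

lemma convex_on_eq_0_if_zero_on_axes:
  fixes g :: "'a::euclidean_space \<Rightarrow> real"
  assumes "convex_on UNIV g" and "\<And>b a. b \<in> Basis \<Longrightarrow> g (a *\<^sub>R b) = 0"
  shows "g x = 0"
proof -
  obtain b :: 'a where "b \<in> Basis"
    using nonempty_Basis by blast
  then have "g 0 = 0"
    using assms(2)[of b 0] by simp
  moreover have "g 0 \<le> (1 / 2) * g x + (1 / 2) * g (- x)"
    using convex_onD[OF assms(1), of "1 / 2" x "- x"] by simp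
  ultimately show ?thesis
    using convex_on_nonpos_if_zero_on_axes[OF assms, of x]
      convex_on_nonpos_if_zero_on_axes[OF assms, of "- x"] by simp
qed

lemma digits_sum_less:
  fixes a :: "nat \<Rightarrow> nat"
  assumes "\<forall>j<n. a j < B"
  shows "(\<Sum>j<n. a j * B ^ j) < B ^ n"
  using assms
proof (induction n)
  case 0
  then show ?case by simp
next
  case (Suc n)
  have "(\<Sum>j<Suc n. a j * B ^ j) = (\<Sum>j<n. a j * B ^ j) + a n * B ^ n" by simp
  also have "\<dots> < B ^ n + a n * B ^ n" using Suc by simp
  also have "\<dots> = (a n + 1) * B ^ n" by simp
  also have "\<dots> \<le> B * B ^ n" using Suc.prems by (intro mult_right_mono) auto
  finally show ?case by simp
qed

lemma digits_unique:
  fixes a b :: "nat \<Rightarrow> nat"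
  assumes "\<forall>j<n. a j < B" "\<forall>j<n. b j < B"
    and "(\<Sum>j<n. a j * B ^ j) = (\<Sum>j<n. b j * B ^ j)"
  shows "\<forall>j<n. a j = b j"
  using assms
proof (induction n)
  case 0
  then show ?case by simp
next
  case (Suc n)
  have less_a: "(\<Sum>j<n. a j * B ^ j) < B ^ n" and less_b: "(\<Sum>j<n. b j * B ^ j) < B ^ n"
    using Suc.prems by (auto intro!: digits_sum_less)
  then have "B ^ n > 0" by linarith
  have eq: "(\<Sum>j<n. a j * B ^ j) + a n * B ^ n = (\<Sum>j<n. b j * B ^ j) + b n * B ^ n"
    using Suc.prems(3) by simp
  have "a n = ((\<Sum>j<n. a j * B ^ j) + a n * B ^ n) div B ^ n"
    using less_a \<open>B ^ n > 0\<close> by simp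
  also have "\<dots> = b n"
    unfolding eq using less_b \<open>B ^ n > 0\<close> by simp
  finally have "a n = b n" .
  with eq have "\<forall>j<n. a j = b j"
    using Suc.prems by (intro Suc.IH) auto
  with \<open>a n = b n\<close> show ?case using less_Suc_eq by auto
qed

lemma inj_on_kronecker_exponent:
  fixes g :: "'n::finite \<Rightarrow> nat" and B :: nat
  assumes "bij_betw g UNIV {..<CARD('n)}"
  shows "inj_on (\<lambda>\<beta>. \<Sum>i\<in>UNIV. \<beta> i * B ^ g i) {\<beta>. \<forall>i. \<beta> i < B}"
proof
  define h where "h = inv_into UNIV g"
  have h: "bij_betw h {..<CARD('n)} UNIV"
    unfolding h_def using assms by (rule bij_betw_inv_into)
  have digits: "(\<Sum>i\<in>UNIV. \<beta> i * B ^ g i) = (\<Sum>j<CARD('n). \<beta> (h j) * B ^ j)" for \<beta> :: "'n \<Rightarrow> nat"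
    unfolding sum.reindex_bij_betw[OF h, symmetric] h_def
    using assms by (intro sum.cong) (auto simp: bij_betw_def f_inv_into_f)
  fix \<beta> \<gamma> :: "'n \<Rightarrow> nat"
  assume "\<beta> \<in> {\<beta>. \<forall>i. \<beta> i < B}" "\<gamma> \<in> {\<beta>. \<forall>i. \<beta> i < B}"
    and "(\<Sum>i\<in>UNIV. \<beta> i * B ^ g i) = (\<Sum>i\<in>UNIV. \<gamma> i * B ^ g i)"
  then have eq: "\<forall>j<CARD('n). \<beta> (h j) = \<gamma> (h j)"
    by (intro digits_unique[where B = B]) (auto simp: digits)
  show "\<beta> = \<gamma>"
  proof
    fix i
    have "g i < CARD('n)" "h (g i) = i"
      using assms by (auto simp: h_def bij_betw_def)
    with eq show "\<beta> i = \<gamma> i" by metis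
  qed
qed

lemma power_sums_eq_0_imp_coeffs_eq_0:
  fixes c :: "'a \<Rightarrow> real"
  assumes "finite A" "inj_on e A" "\<And>T. (\<Sum>\<beta>\<in>A. c \<beta> * T ^ e \<beta>) = 0" "\<beta> \<in> A"
  shows "c \<beta> = 0"
proof -
  define K where "K = Max (e ` A)"
  define d where "d k = (if k \<in> e ` A then c (the_inv_into A e k) else 0)" for k
  have "(\<Sum>k\<le>K. d k * T ^ k) = 0" for T
  proof -
    have "(\<Sum>k\<le>K. d k * T ^ k) = (\<Sum>k\<in>e ` A. d k * T ^ k)"
      using assms(1) by (intro sum.mono_neutral_right) (auto simp: K_def d_def)
    also have "\<dots> = (\<Sum>\<beta>\<in>A. c \<beta> * T ^ e \<beta>)"
      using assms(2) by (simp add: sum.reindex d_def the_inv_into_f_f)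
    finally show ?thesis using assms(3) by simp
  qed
  then have "d (e \<beta>) = 0"
    using polyfun_eq_0[of d K] assms(1,4) by (simp add: K_def)
  then show ?thesis
    using assms(2,4) by (simp add: d_def the_inv_into_f_f)
qed

lemma mono_eval_kronecker:
  "mono_eval \<beta> (\<chi> i. T ^ (B ^ g i)) = T ^ (\<Sum>i\<in>UNIV. \<beta> i * B ^ g i)"
  unfolding mono_eval_def power_sum
  by (intro prod.cong refl) (simp add: power_mult[symmetric] mult.commute)

lemma mpoly_eval_eq_0_imp_coeff_eq_0:
  fixes c :: "('n::finite \<Rightarrow> nat) \<Rightarrow> real"
  assumes fin: "finite {\<alpha>. c \<alpha> \<noteq> 0}" and zero: "\<And>x. mpoly_eval c x = 0"
  shows "c \<alpha> = 0"
proof (rule ccontr)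
  assume "c \<alpha> \<noteq> 0"
  define A where "A = {\<alpha>. c \<alpha> \<noteq> 0}"
  define B where "B = Suc (Max (insert 0 ((\<lambda>\<beta>. sum \<beta> UNIV) ` A)))"
  obtain g :: "'n \<Rightarrow> nat" where g: "bij_betw g UNIV {..<CARD('n)}"
    using to_nat_on_finite[of "UNIV :: 'n set"] by auto
  \<comment> \<open>Kronecker substitution: \<open>x\<^sub>i = T ^ B ^ g i\<close> sends the monomials of \<open>c\<close>,
    whose exponents are all below \<open>B\<close>, to pairwise distinct powers of \<open>T\<close>.\<close>
  define e where "e \<beta> = (\<Sum>i\<in>UNIV. \<beta> i * B ^ g i)" for \<beta> :: "'n \<Rightarrow> nat"
  have "\<beta> i < B" if "\<beta> \<in> A" for \<beta> i
  proof -
    have "\<beta> i \<le> sum \<beta> UNIV" by (rule member_le_sum) auto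
    also have "\<dots> \<le> Max (insert 0 ((\<lambda>\<beta>. sum \<beta> UNIV) ` A))"
      using fin that by (intro Max_ge) (auto simp: A_def)
    finally show ?thesis unfolding B_def by simp
  qed
  then have "A \<subseteq> {\<beta>. \<forall>i. \<beta> i < B}" by blast
  then have inj: "inj_on e A"
    unfolding e_def by (rule inj_on_subset[OF inj_on_kronecker_exponent[OF g]])
  have sums: "(\<Sum>\<beta>\<in>A. c \<beta> * T ^ e \<beta>) = 0" for T
  proof -
    have "(\<Sum>\<beta>\<in>A. c \<beta> * T ^ e \<beta>) = mpoly_eval c (\<chi> i. T ^ (B ^ g i))"
      unfolding mpoly_eval_def mono_eval_kronecker A_def e_def ..
    then show ?thesis using zero by simp
  qed
  have "finite A" "\<alpha> \<in> A"
    using fin \<open>c \<alpha> \<noteq> 0\<close> by (simp_all add: A_def)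
  then have "c \<alpha> = 0"
    by (rule power_sums_eq_0_imp_coeffs_eq_0[OF _ inj sums])
  with \<open>c \<alpha> \<noteq> 0\<close> show False by simp
qed

definition homogeneous_part :: "nat \<Rightarrow> (('n \<Rightarrow> nat) \<Rightarrow> real) \<Rightarrow> ('n \<Rightarrow> nat) \<Rightarrow> real" where
  "homogeneous_part D c \<alpha> = (if sum \<alpha> UNIV = D then c \<alpha> else 0)"

lemma sum_le_total_degree:
  assumes "finite {\<alpha>. c \<alpha> \<noteq> 0}" "c \<alpha> \<noteq> 0"
  shows "sum \<alpha> UNIV \<le> total_degree c"
  unfolding total_degree_def using assms by (intro Max_ge) (auto intro: finite_image_set)

lemma total_degree_attained:
  assumes "finite {\<alpha>. c \<alpha> \<noteq> 0}" "total_degree c \<noteq> 0"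
  obtains \<alpha> where "c \<alpha> \<noteq> 0" "sum \<alpha> UNIV = total_degree c"
proof -
  have "total_degree c \<in> insert 0 {sum \<alpha> UNIV | \<alpha>. c \<alpha> \<noteq> 0}"
    unfolding total_degree_def using assms(1) by (intro Max_in) (auto intro: finite_image_set)
  with assms(2) that show ?thesis by auto
qed

lemma degree_le_separable_degree: "degree (s j) \<le> separable_degree s"
  unfolding separable_degree_def by (rule Max_ge) auto

lemma mono_eval_scaleR: "mono_eval \<alpha> (t *\<^sub>R x) = t ^ sum \<alpha> UNIV * mono_eval \<alpha> x"
  unfolding mono_eval_def power_sum by (simp add: power_mult_distrib prod.distrib)

lemma mono_eval_scaleR_axis_eq_0:
  assumes "non_separable_mono \<alpha>"
  shows "mono_eval \<alpha> (a *\<^sub>R axis i 1) = 0"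
proof -
  have "\<not> {j. \<alpha> j \<noteq> 0} \<subseteq> {i}"
    using assms card_mono[of "{i}" "{j. \<alpha> j \<noteq> 0}"] by (auto simp: non_separable_mono_def)
  then obtain j where "j \<noteq> i" "\<alpha> j \<noteq> 0" by blast
  then show ?thesis
    unfolding mono_eval_def by (intro prod_zero bexI[of _ j]) (auto simp: axis_def)
qed

lemma mpoly_eval_scaleR_axis_eq_0:
  assumes "\<And>\<alpha>. c \<alpha> \<noteq> 0 \<Longrightarrow> non_separable_mono \<alpha>"
  shows "mpoly_eval c (a *\<^sub>R axis i 1) = 0"
  unfolding mpoly_eval_def using assms mono_eval_scaleR_axis_eq_0 by (intro sum.neutral) auto

lemma tendsto_power_div_power_at_top:
  assumes "k \<le> D"
  shows "((\<lambda>t::real. t ^ k / t ^ D) \<longlongrightarrow> (if k = D then 1 else 0)) at_top"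
proof -
  have eq: "eventually (\<lambda>t::real. inverse (t ^ (D - k)) = t ^ k / t ^ D) at_top"
    using eventually_gt_at_top[of 0] by eventually_elim (simp add: assms power_diff)
  have "((\<lambda>t::real. inverse (t ^ (D - k))) \<longlongrightarrow> (if k = D then 1 else 0)) at_top"
  proof (cases "k = D")
    case False
    with assms show ?thesis
      by (auto intro!: tendsto_inverse_0_at_top filterlim_pow_at_top filterlim_ident)
  qed simp
  then show ?thesis using tendsto_cong[OF eq] by simp
qed

lemma tendsto_separable_eval_scaleR_div:
  assumes "\<And>j. degree (s j) < D"
  shows "((\<lambda>t. separable_eval s (t *\<^sub>R y) / t ^ D) \<longlongrightarrow> 0) at_top"
proof -
  have "separable_eval s (t *\<^sub>R y) / t ^ D
      = (\<Sum>j\<in>UNIV. \<Sum>i\<le>degree (s j). coeff (s j) i * y $ j ^ i * (t ^ i / t ^ D))" for t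
    unfolding separable_eval_def poly_altdef
    by (simp add: sum_divide_distrib power_mult_distrib mult_ac)
  moreover have "((\<lambda>t::real. t ^ i / t ^ D) \<longlongrightarrow> 0) at_top" if "i \<le> degree (s j)" for i j
    using tendsto_power_div_power_at_top[of i D] that assms[of j] by simp
  then have "((\<lambda>t. \<Sum>j\<in>UNIV. \<Sum>i\<le>degree (s j). coeff (s j) i * y $ j ^ i * (t ^ i / t ^ D))
      \<longlongrightarrow> 0) at_top"
    by (intro tendsto_null_sum tendsto_mult_right_zero) auto
  ultimately show ?thesis by simp
qed

lemma tendsto_mpoly_eval_scaleR_div:
  assumes fin: "finite {\<alpha>. c \<alpha> \<noteq> 0}" and deg: "total_degree c \<le> D"
  shows "((\<lambda>t. mpoly_eval c (t *\<^sub>R y) / t ^ D) \<longlongrightarrow> mpoly_eval (homogeneous_part D c) y) at_top"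
proof -
  let ?A = "{\<alpha>. c \<alpha> \<noteq> 0}"
  have "mpoly_eval c (t *\<^sub>R y) / t ^ D
      = (\<Sum>\<alpha>\<in>?A. c \<alpha> * mono_eval \<alpha> y * (t ^ sum \<alpha> UNIV / t ^ D))" for t
    unfolding mpoly_eval_def mono_eval_scaleR by (simp add: sum_divide_distrib mult_ac)
  moreover have "((\<lambda>t. \<Sum>\<alpha>\<in>?A. c \<alpha> * mono_eval \<alpha> y * (t ^ sum \<alpha> UNIV / t ^ D))
      \<longlongrightarrow> (\<Sum>\<alpha>\<in>?A. c \<alpha> * mono_eval \<alpha> y * (if sum \<alpha> UNIV = D then 1 else 0))) at_top"
    using sum_le_total_degree[OF fin] deg
    by (intro tendsto_sum tendsto_mult_left tendsto_power_div_power_at_top) (auto intro: order_trans)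
  moreover have "(\<Sum>\<alpha>\<in>?A. c \<alpha> * mono_eval \<alpha> y * (if sum \<alpha> UNIV = D then 1 else 0))
      = mpoly_eval (homogeneous_part D c) y"
    unfolding mpoly_eval_def homogeneous_part_def
    by (rule sum.mono_neutral_cong_right) (auto simp: fin)
  ultimately show ?thesis by simp
qed

theorem theorem3:
  fixes f :: "real^'n \<Rightarrow> real"
    and s :: "'n \<Rightarrow> real poly"
    and p :: "('n \<Rightarrow> nat) \<Rightarrow> real"
  assumes "convex_on UNIV f"
    and "finite {\<alpha>. p \<alpha> \<noteq> 0}"
    and "\<forall>\<alpha>. p \<alpha> \<noteq> 0 \<longrightarrow> non_separable_mono \<alpha>"
    and "\<forall>x. f x = separable_eval s x + mpoly_eval p x"
  shows "total_degree p \<le> separable_degree s"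
proof (rule ccontr)
  define D where "D = total_degree p"
  define q where "q = homogeneous_part D p"
  assume "\<not> ?thesis"
  then have deg_s: "degree (s j) < D" for j
    using degree_le_separable_degree[of s j] by (simp add: D_def)
  have lim: "((\<lambda>t. f (t *\<^sub>R y) / t ^ D) \<longlongrightarrow> mpoly_eval q y) at_top" for y
    using tendsto_add[OF tendsto_separable_eval_scaleR_div[OF deg_s]
        tendsto_mpoly_eval_scaleR_div[OF assms(2) order.refl]] assms(4)
    by (simp add: q_def D_def add_divide_distrib)
  have "eventually (\<lambda>t. convex_on UNIV (\<lambda>y. f (t *\<^sub>R y) / t ^ D)) at_top"
    using eventually_gt_at_top[of 0]
    by eventually_elim (simp add: assms(1) convex_on_cdiv convex_on_compose_scaleR)
  then have convex: "convex_on UNIV (mpoly_eval q)"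
    using lim by (intro convex_on_tendsto[of at_top]) auto
  have axes: "mpoly_eval q (a *\<^sub>R b) = 0" if "b \<in> Basis" for a b
    using that assms(3)
    by (auto simp: Basis_vec_def q_def homogeneous_part_def split: if_splits
        intro!: mpoly_eval_scaleR_axis_eq_0)
  have "finite {\<alpha>. q \<alpha> \<noteq> 0}"
    using assms(2) by (rule rev_finite_subset) (auto simp: q_def homogeneous_part_def)
  then have "q \<alpha> = 0" for \<alpha>
    using convex_on_eq_0_if_zero_on_axes[OF convex axes] by (rule mpoly_eval_eq_0_imp_coeff_eq_0)
  moreover obtain \<alpha> where "p \<alpha> \<noteq> 0" "sum \<alpha> UNIV = D"
    using total_degree_attained[OF assms(2)] deg_s by (metis D_def not_less0)
  ultimately show False
    unfolding q_def homogeneous_part_def by metis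
qed

end
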